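(* Let $\mathcal{X}\subseteq\mathbb{R}^d$ be nonempty, closed and convex, let $f:\mathbb{R}^d\to\mathbb{R}$ be differentiable, $L$-smooth and $\mu$-strongly convex on $\mathcal{X}$ ($0<\mu\le L$), and assume $\mathcal{X}_\star:=\operatorname{arg\,min}_{x\in\mathcal{X}} f(x)$ is nonempty. Let $\{x_k\}_{k\ge0}$ be generated by the Local LMO iteration $x_{k+1}\in\operatorname{arg\,min}_{z\in\mathcal{X}\cap\mathcal{B}(x_k,t_k)}\langle\nabla f(x_k),z\rangle$ with $x_0\in\mathcal{X}$, and let $x_\star\in\mathcal{X}_\star$. Set $\theta=\frac{2\sqrt{\mu L}}{L+\mu}$. Fix $k\ge0$; if $\nabla f(x_k)\ne\nabla f(x_\star)$ and $t_k=\theta\|x_k-x_\star\|$, then $$\|x_{k+1}-x_\star\|^2\le(1-\theta^2)\|x_k-x_\star\|^2=\Big(\frac{L-\mu}{L+\mu}\Big)^2\|x_k-x_\star\|^2.$$ Hence, with the radii $t_k=\theta\|x_k-x_\star\|$ used at every iteration, for any $K\ge0$, $$\|x_K-x_\star\|^2\le\Big(\frac{L-\mu}{L+\mu}\Big)^{2K}\|x_0-x_\star\|^2.$$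
   Context: $\|\cdot\|$ is the Euclidean norm, $\mathcal{B}(x,t):=\{y:\|y-x\|\le t\}$. $L$-smooth: $\nabla f$ is $L$-Lipschitz. $\mu$-strongly convex: $f(y)\ge f(x)+\langle\nabla f(x),y-x\rangle+\frac{\mu}{2}\|y-x\|^2$. *)

theory Defs
  imports "HOL-Analysis.Analysis"
begin

end

(*
  Write d = x k - xs and e = x (Suc k) - x k. Subtracting (mu/2) |x|^2 turns f into a convex
  function whose gradient G = g - mu id is (L - mu)-smooth on X. Since X may have empty interior,
  co-coercivity of G is available only in directions of the triangle (x k, xs, x (Suc k)): summing
  the four-point form of convexity and smoothness along the segment, after pulling it towards the
  centroid, gives |P (G (x k) - G xs)|^2 <= (L - mu) <G (x k) - G xs, d> for the orthogonal
  projection P onto the plane of d and e. For h = P (g (x k) - g xs) this reads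
  |h|^2 + mu L |d|^2 <= (L + mu) <h, d>, hence <h, d> >= theta |h| |d| by AM-GM.
  If x (Suc k) were farther from xs than sqrt (1 - theta^2) |d|, a short step from it towards xs
  would stay in the ball, so the LMO gives <g (x k), x (Suc k) - xs> <= 0, while optimality of xs
  gives <g xs, x (Suc k) - xs> >= 0. Then d + e lies in the half-space <h, .> <= 0 and in the ball
  of radius theta |d| around d, and every such point has norm at most sqrt (1 - theta^2) |d|.
*)

theory Submission
  imports Defs
begin

lemma power2_norm_add:
  fixes x y :: "'a::real_inner"
  shows "(norm (x + y))\<^sup>2 = (norm x)\<^sup>2 + 2 * (x \<bullet> y) + (norm y)\<^sup>2"
  by (simp add: power2_norm_eq_inner inner_add_left inner_add_right inner_commute[of y x])

lemma power2_norm_diff: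
  fixes x y :: "'a::real_inner"
  shows "(norm (x - y))\<^sup>2 = (norm x)\<^sup>2 - 2 * (x \<bullet> y) + (norm y)\<^sup>2"
  using power2_norm_add[of x "- y"] by simp

lemma has_real_derivative_along_line:
  fixes f :: "'a::real_inner \<Rightarrow> real"
  assumes "(f has_derivative (\<lambda>h. G \<bullet> h)) (at (p + s *\<^sub>R v))"
  shows "((\<lambda>s. f (p + s *\<^sub>R v)) has_real_derivative (G \<bullet> v)) (at s)"
proof -
  have "((\<lambda>s. p + s *\<^sub>R v) has_derivative (\<lambda>h. h *\<^sub>R v)) (at s)"
    by (auto intro!: derivative_eq_intros)
  from diff_chain_at[OF this assms]
  have "((\<lambda>s. f (p + s *\<^sub>R v)) has_derivative (\<lambda>h. h * (G \<bullet> v))) (at s)"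
    by (simp add: o_def)
  moreover have "(\<lambda>h. h * (G \<bullet> v)) = (*) (G \<bullet> v)"
    by (auto simp: fun_eq_iff)
  ultimately show ?thesis
    by (simp add: has_field_derivative_def)
qed

lemma lipschitz_gradient_quadratic_upper_bound:
  fixes f :: "'a::real_inner \<Rightarrow> real"
  assumes "convex X"
    and grad: "\<And>y. y \<in> X \<Longrightarrow> (f has_derivative (\<lambda>h. g y \<bullet> h)) (at y)"
    and lipschitz: "L-lipschitz_on X g"
    and p: "p \<in> X" and q: "q \<in> X"
  shows "f q \<le> f p + g p \<bullet> (q - p) + L / 2 * (norm (q - p))\<^sup>2"
proof -
  define v where "v = q - p"
  define \<psi> where "\<psi> s = f (p + s *\<^sub>R v) - s * (g p \<bullet> v) - L / 2 * s\<^sup>2 * (norm v)\<^sup>2" for s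
  have "\<psi> 1 \<le> \<psi> 0"
  proof (rule DERIV_nonpos_imp_nonincreasing[of 0 1])
    fix s :: real
    assume s: "0 \<le> s" "s \<le> 1"
    have ps: "p + s *\<^sub>R v \<in> X"
      using convexD[OF \<open>convex X\<close> p q, of "1 - s" s] s by (simp add: v_def algebra_simps)
    have "DERIV \<psi> s :> g (p + s *\<^sub>R v) \<bullet> v - g p \<bullet> v - L * s * (norm v)\<^sup>2"
      unfolding \<psi>_def
      by (rule derivative_eq_intros has_real_derivative_along_line grad ps refl | simp)+
    moreover have "(g (p + s *\<^sub>R v) - g p) \<bullet> v \<le> L * s * (norm v)\<^sup>2"
    proof -
      have "(g (p + s *\<^sub>R v) - g p) \<bullet> v \<le> norm (g (p + s *\<^sub>R v) - g p) * norm v"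
        by (rule norm_cauchy_schwarz)
      also have "\<dots> \<le> L * norm (s *\<^sub>R v) * norm v"
        using lipschitz_on_normD[OF lipschitz ps p] by (simp add: mult_right_mono)
      finally show ?thesis
        using s by (simp add: power2_eq_square mult.assoc)
    qed
    ultimately show "\<exists>y. DERIV \<psi> s :> y \<and> y \<le> 0"
      by (auto simp: inner_diff_left)
  qed simp
  then show ?thesis
    by (simp add: \<psi>_def v_def)
qed

lemma convex_minimizer_first_order:
  fixes f :: "'a::real_inner \<Rightarrow> real"
  assumes "convex X"
    and grad: "(f has_derivative (\<lambda>h. G \<bullet> h)) (at b)"
    and b: "b \<in> X" and min: "\<And>y. y \<in> X \<Longrightarrow> f b \<le> f y"
    and y: "y \<in> X"
  shows "0 \<le> G \<bullet> (y - b)"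
proof (rule ccontr)
  assume "\<not> 0 \<le> G \<bullet> (y - b)"
  then have "G \<bullet> (y - b) < 0"
    by simp
  moreover have "((\<lambda>s. f (b + s *\<^sub>R (y - b))) has_real_derivative G \<bullet> (y - b)) (at 0)"
    by (rule has_real_derivative_along_line) (simp add: grad)
  ultimately obtain d where "d > 0"
    and decrease: "\<forall>h>0. h < d \<longrightarrow> f (b + 0 *\<^sub>R (y - b)) > f (b + (0 + h) *\<^sub>R (y - b))"
    using DERIV_neg_dec_right by blast
  define s where "s = min (d / 2) 1"
  have "0 < s" "s < d" "s \<le> 1"
    using \<open>d > 0\<close> by (auto simp: s_def)
  then have "f (b + s *\<^sub>R (y - b)) < f b"
    using decrease by simp
  moreover have "b + s *\<^sub>R (y - b) \<in> X"
    using convexD[OF \<open>convex X\<close> b y, of "1 - s" s] \<open>0 < s\<close> \<open>s \<le> 1\<close> by (simp add: algebra_simps)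
  ultimately show False
    using min[of "b + s *\<^sub>R (y - b)"] by simp
qed

lemma convex_room_at_centroid:
  fixes a b z :: "'a::real_vector"
  assumes "convex X" and X: "a \<in> X" "b \<in> X" "z \<in> X"
    and w: "w \<in> span {a - b, z - a}"
  obtains \<rho> where "\<rho> > 0" and "\<And>\<sigma>. \<bar>\<sigma>\<bar> \<le> \<rho> \<Longrightarrow> (1/3) *\<^sub>R (a + b + z) + \<sigma> *\<^sub>R w \<in> X"
proof -
  obtain \<alpha> \<beta> where w_eq: "w = \<alpha> *\<^sub>R (a - b) + \<beta> *\<^sub>R (z - a)"
    using w by (auto simp: span_breakdown_eq span_singleton algebra_simps)
  define \<rho> where "\<rho> = 1 / (3 * (\<bar>\<alpha>\<bar> + \<bar>\<beta>\<bar> + 1))"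
  have "(1/3) *\<^sub>R (a + b + z) + \<sigma> *\<^sub>R w \<in> X" if \<sigma>: "\<bar>\<sigma>\<bar> \<le> \<rho>" for \<sigma>
  proof -
    have "\<bar>\<sigma> * \<alpha>\<bar> + \<bar>\<sigma> * \<beta>\<bar> \<le> \<rho> * (\<bar>\<alpha>\<bar> + \<bar>\<beta>\<bar>)"
      using \<sigma> by (simp add: abs_mult distrib_left[symmetric] mult_right_mono)
    also have "\<dots> \<le> 1/3"
      by (simp add: \<rho>_def field_simps)
    finally have small: "\<bar>\<sigma> * \<alpha>\<bar> + \<bar>\<sigma> * \<beta>\<bar> \<le> 1/3" .
    have "(1/3) *\<^sub>R (a + b + z) + \<sigma> *\<^sub>R w
        = (1/3 + \<sigma>*\<alpha> - \<sigma>*\<beta>) *\<^sub>R a + (1/3 - \<sigma>*\<alpha>) *\<^sub>R b + (1/3 + \<sigma>*\<beta>) *\<^sub>R z"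
      by (simp add: w_eq algebra_simps)
    also have "\<dots> \<in> convex hull {a, b, z}"
    proof -
      have nonneg: "0 \<le> 1/3 + \<sigma>*\<alpha> - \<sigma>*\<beta>" "0 \<le> 1/3 - \<sigma>*\<alpha>" "0 \<le> 1/3 + \<sigma>*\<beta>"
        using small abs_ge_self[of "\<sigma>*\<alpha>"] abs_ge_minus_self[of "\<sigma>*\<alpha>"]
          abs_ge_self[of "\<sigma>*\<beta>"] abs_ge_minus_self[of "\<sigma>*\<beta>"] by linarith+
      have sum: "(1/3 + \<sigma>*\<alpha> - \<sigma>*\<beta>) + (1/3 - \<sigma>*\<alpha>) + (1/3 + \<sigma>*\<beta>) = 1"
        by simp
      show ?thesis
        unfolding convex_hull_3 mem_Collect_eq
        by (rule exI[of _ "1/3 + \<sigma>*\<alpha> - \<sigma>*\<beta>"], rule exI[of _ "1/3 - \<sigma>*\<alpha>"],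
            rule exI[of _ "1/3 + \<sigma>*\<beta>"]) (use nonneg sum in simp)
    qed
    also have "convex hull {a, b, z} \<subseteq> X"
      using X \<open>convex X\<close> by (intro hull_minimal) auto
    finally show ?thesis .
  qed
  moreover have "\<rho> > 0"
    by (simp add: \<rho>_def add_nonneg_pos)
  ultimately show ?thesis
    using that by blast
qed

lemma convex_room_along_shifted_segment:
  fixes a b m w :: "'a::real_vector"
  assumes "convex X" and a: "a \<in> X" and b: "b \<in> X"
    and room: "\<And>\<sigma>. \<bar>\<sigma>\<bar> \<le> \<rho> \<Longrightarrow> m + \<sigma> *\<^sub>R w \<in> X"
    and \<epsilon>: "0 < \<epsilon>" "\<epsilon> \<le> 1" and \<tau>: "0 \<le> \<tau>" "\<tau> \<le> 1" and \<sigma>: "\<bar>\<sigma>\<bar> \<le> \<epsilon> * \<rho>"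
  shows "((1 - \<epsilon>) *\<^sub>R b + \<epsilon> *\<^sub>R m)
           + \<tau> *\<^sub>R (((1 - \<epsilon>) *\<^sub>R a + \<epsilon> *\<^sub>R m) - ((1 - \<epsilon>) *\<^sub>R b + \<epsilon> *\<^sub>R m)) + \<sigma> *\<^sub>R w \<in> X"
proof -
  have "b + \<tau> *\<^sub>R (a - b) \<in> X"
    using convexD[OF \<open>convex X\<close> b a, of "1 - \<tau>" \<tau>] \<tau> by (simp add: algebra_simps)
  moreover have "m + (\<sigma> / \<epsilon>) *\<^sub>R w \<in> X"
    using room \<sigma> \<epsilon> by (simp add: abs_divide pos_divide_le_eq mult.commute)
  ultimately have "(1 - \<epsilon>) *\<^sub>R (b + \<tau> *\<^sub>R (a - b)) + \<epsilon> *\<^sub>R (m + (\<sigma> / \<epsilon>) *\<^sub>R w) \<in> X"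
    using convexD[OF \<open>convex X\<close>] \<epsilon> by simp
  moreover have "(1 - \<epsilon>) *\<^sub>R (b + \<tau> *\<^sub>R (a - b)) + \<epsilon> *\<^sub>R (m + (\<sigma> / \<epsilon>) *\<^sub>R w)
      = ((1 - \<epsilon>) *\<^sub>R b + \<epsilon> *\<^sub>R m)
           + \<tau> *\<^sub>R (((1 - \<epsilon>) *\<^sub>R a + \<epsilon> *\<^sub>R m) - ((1 - \<epsilon>) *\<^sub>R b + \<epsilon> *\<^sub>R m)) + \<sigma> *\<^sub>R w"
    using \<epsilon> by (simp add: algebra_simps)
  ultimately show ?thesis
    by simp
qed

lemma le_mult_of_quadratic_family:
  fixes c q \<kappa> :: real
  assumes bound: "\<And>S. 0 \<le> S \<Longrightarrow> 2 * S * q - \<kappa> * S\<^sup>2 * q \<le> c"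
    and "0 \<le> \<kappa>" "0 \<le> q"
  shows "q \<le> \<kappa> * c"
proof (cases "\<kappa> = 0")
  case True
  have "q = 0"
  proof (rule ccontr)
    assume "q \<noteq> 0"
    then have "2 * ((\<bar>c\<bar> + 1) / q) * q = 2 * (\<bar>c\<bar> + 1)"
      by simp
    then show False
      using bound[of "(\<bar>c\<bar> + 1) / q"] True \<open>0 \<le> q\<close> by simp
  qed
  then show ?thesis
    using True by simp
next
  case False
  then have "\<kappa> > 0"
    using \<open>0 \<le> \<kappa>\<close> by simp
  then have "2 * (1 / \<kappa>) * q - \<kappa> * (1 / \<kappa>)\<^sup>2 * q = q / \<kappa>"
    by (simp add: power2_eq_square field_simps)
  then have "q / \<kappa> \<le> c"
    using bound[of "1 / \<kappa>"] \<open>\<kappa> > 0\<close> by simp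
  then show ?thesis
    using \<open>\<kappa> > 0\<close> by (simp add: pos_divide_le_eq mult.commute)
qed

(* phi and G stand for f - (mu/2) |x|^2 and g - mu id; only inequalities between points of X
   are assumed, since X may have empty interior. *)
locale smooth_convex_on =
  fixes X :: "'a::euclidean_space set" and \<phi> :: "'a \<Rightarrow> real" and G :: "'a \<Rightarrow> 'a"
    and \<kappa> :: real
  assumes convex: "convex X"
    and continuous: "continuous_on X G"
    and nonneg: "0 \<le> \<kappa>"
    and lower: "\<And>u v. u \<in> X \<Longrightarrow> v \<in> X \<Longrightarrow> \<phi> u + G u \<bullet> (v - u) \<le> \<phi> v"
    and upper: "\<And>u v. u \<in> X \<Longrightarrow> v \<in> X \<Longrightarrow>
                  \<phi> v \<le> \<phi> u + G u \<bullet> (v - u) + \<kappa> / 2 * (norm (v - u))\<^sup>2"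
begin

lemma gradient_gap_lower_step:
  assumes "a \<in> X" "b \<in> X" "b + s *\<^sub>R w \<in> X" "a - s *\<^sub>R w \<in> X"
  shows "2 * s * ((G a - G b) \<bullet> w) - \<kappa> * s\<^sup>2 * (norm w)\<^sup>2 \<le> (G a - G b) \<bullet> (a - b)"
proof -
  have "\<phi> a + G a \<bullet> (b + s *\<^sub>R w - a) \<le> \<phi> (b + s *\<^sub>R w)"
    "\<phi> b + G b \<bullet> (a - s *\<^sub>R w - b) \<le> \<phi> (a - s *\<^sub>R w)"
    using lower[OF assms(1,3)] lower[OF assms(2,4)] .
  moreover have "\<phi> (b + s *\<^sub>R w) \<le> \<phi> b + s * (G b \<bullet> w) + \<kappa> / 2 * (s\<^sup>2 * (norm w)\<^sup>2)"
    using upper[of b "b + s *\<^sub>R w"] assms by (simp add: power_mult_distrib)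
  moreover have "\<phi> (a - s *\<^sub>R w) \<le> \<phi> a - s * (G a \<bullet> w) + \<kappa> / 2 * (s\<^sup>2 * (norm w)\<^sup>2)"
    using upper[of a "a - s *\<^sub>R w"] assms by (simp add: power_mult_distrib)
  ultimately show ?thesis
    by (simp add: inner_diff_left inner_diff_right inner_add_right algebra_simps)
qed

lemma gradient_gap_lower_chain:
  assumes "\<And>i. i < n \<Longrightarrow> p (Suc i) - p i = \<delta>"
    and "\<And>i. i < n \<Longrightarrow> p i \<in> X \<and> p (Suc i) \<in> X \<and> p i + s *\<^sub>R w \<in> X \<and> p (Suc i) - s *\<^sub>R w \<in> X"
  shows "2 * s * ((G (p n) - G (p 0)) \<bullet> w) - real n * (\<kappa> * s\<^sup>2 * (norm w)\<^sup>2)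
           \<le> (G (p n) - G (p 0)) \<bullet> \<delta>"
  using assms
proof (induction n)
  case 0
  then show ?case
    by simp
next
  case (Suc n)
  have "2 * s * ((G (p (Suc n)) - G (p n)) \<bullet> w) - \<kappa> * s\<^sup>2 * (norm w)\<^sup>2
          \<le> (G (p (Suc n)) - G (p n)) \<bullet> \<delta>"
    using gradient_gap_lower_step[of "p (Suc n)" "p n" s w] Suc.prems by auto
  with Suc show ?case
    by (simp add: inner_diff_left algebra_simps)
qed

(* Cutting [b, a] into N pieces, each step needs room only S / N in direction w, and the N step
   inequalities add up to the one for S. *)
lemma gradient_gap_lower_segment:
  assumes "0 < \<rho>" "0 \<le> S"
    and room: "\<And>\<tau> \<sigma>. 0 \<le> \<tau> \<Longrightarrow> \<tau> \<le> 1 \<Longrightarrow> \<bar>\<sigma>\<bar> \<le> \<rho> \<Longrightarrow> b + \<tau> *\<^sub>R (a - b) + \<sigma> *\<^sub>R w \<in> X"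
  shows "2 * S * ((G a - G b) \<bullet> w) - \<kappa> * S\<^sup>2 * (norm w)\<^sup>2 \<le> (G a - G b) \<bullet> (a - b)"
proof -
  define N :: nat where "N = nat \<lceil>S / \<rho>\<rceil> + 1"
  define s where "s = S / N"
  define p where "p i = b + (real i / real N) *\<^sub>R (a - b)" for i
  have N: "0 < N" "S / \<rho> \<le> real N"
    unfolding N_def by linarith+
  then have s: "0 \<le> s" "s \<le> \<rho>" "real N * s = S"
    using assms by (auto simp: s_def field_simps)
  have p_room: "p i + \<sigma> *\<^sub>R w \<in> X" if "i \<le> N" "\<bar>\<sigma>\<bar> \<le> \<rho>" for i \<sigma>
    using room[of "i / N" \<sigma>] that N by (simp add: p_def)
  have "2 * s * ((G (p N) - G (p 0)) \<bullet> w) - real N * (\<kappa> * s\<^sup>2 * (norm w)\<^sup>2)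
          \<le> (G (p N) - G (p 0)) \<bullet> ((1 / N) *\<^sub>R (a - b))"
  proof (rule gradient_gap_lower_chain)
    fix i
    assume "i < N"
    show "p (Suc i) - p i = (1 / N) *\<^sub>R (a - b)"
      by (simp add: p_def add_divide_distrib scaleR_add_left)
    show "p i \<in> X \<and> p (Suc i) \<in> X \<and> p i + s *\<^sub>R w \<in> X \<and> p (Suc i) - s *\<^sub>R w \<in> X"
      using p_room[of i 0] p_room[of "Suc i" 0] p_room[of i s] p_room[of "Suc i" "- s"] \<open>i < N\<close> s \<open>0 < \<rho>\<close>
      by auto
  qed
  moreover have "p N = a" "p 0 = b"
    using N by (auto simp: p_def)
  moreover have "(G a - G b) \<bullet> ((1 / N) *\<^sub>R (a - b)) = ((G a - G b) \<bullet> (a - b)) / N"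
    by simp
  ultimately have "real N * (2 * s * ((G a - G b) \<bullet> w) - real N * (\<kappa> * s\<^sup>2 * (norm w)\<^sup>2))
                     \<le> (G a - G b) \<bullet> (a - b)"
    using N by (simp add: pos_le_divide_eq mult.commute)
  moreover have "real N * (2 * s * ((G a - G b) \<bullet> w) - real N * (\<kappa> * s\<^sup>2 * (norm w)\<^sup>2))
                   = 2 * S * ((G a - G b) \<bullet> w) - \<kappa> * S\<^sup>2 * (norm w)\<^sup>2"
    unfolding s(3)[symmetric] by (simp add: power2_eq_square algebra_simps)
  ultimately show ?thesis
    by simp
qed

(* Pulling a and b towards m by the factor epsilon gives their segment room epsilon * rho in
   direction w; then epsilon tends to 0 by continuity of G. *)
lemma gradient_gap_lower_bound:
  assumes a: "a \<in> X" and b: "b \<in> X" and "0 \<le> S" "0 < \<rho>"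
    and room: "\<And>\<sigma>. \<bar>\<sigma>\<bar> \<le> \<rho> \<Longrightarrow> m + \<sigma> *\<^sub>R w \<in> X"
  shows "2 * S * ((G a - G b) \<bullet> w) - \<kappa> * S\<^sup>2 * (norm w)\<^sup>2 \<le> (G a - G b) \<bullet> (a - b)"
proof -
  define shift where "shift \<epsilon> x = (1 - \<epsilon>) *\<^sub>R x + \<epsilon> *\<^sub>R m" for \<epsilon> :: real and x
  define \<epsilon> :: "nat \<Rightarrow> real" where "\<epsilon> n = inverse (real (Suc n))" for n
  have \<epsilon>: "0 < \<epsilon> n" "\<epsilon> n \<le> 1" for n
    by (auto simp: \<epsilon>_def field_simps)
  have gap: "2 * S * ((G (shift (\<epsilon> n) a) - G (shift (\<epsilon> n) b)) \<bullet> w) - \<kappa> * S\<^sup>2 * (norm w)\<^sup>2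
               \<le> (G (shift (\<epsilon> n) a) - G (shift (\<epsilon> n) b)) \<bullet> (shift (\<epsilon> n) a - shift (\<epsilon> n) b)" for n
  proof (rule gradient_gap_lower_segment)
    show "0 < \<epsilon> n * \<rho>"
      using \<epsilon> \<open>0 < \<rho>\<close> by simp
    show "shift (\<epsilon> n) b + \<tau> *\<^sub>R (shift (\<epsilon> n) a - shift (\<epsilon> n) b) + \<sigma> *\<^sub>R w \<in> X"
      if "0 \<le> \<tau>" "\<tau> \<le> 1" "\<bar>\<sigma>\<bar> \<le> \<epsilon> n * \<rho>" for \<tau> \<sigma>
      unfolding shift_def using convex a b room \<epsilon> that by (rule convex_room_along_shifted_segment)
  qed fact
  have shift_lim: "(\<lambda>n. shift (\<epsilon> n) x) \<longlonglongrightarrow> x" for x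
  proof -
    have "\<epsilon> \<longlonglongrightarrow> 0"
      unfolding \<epsilon>_def by (rule LIMSEQ_inverse_real_of_nat)
    then have "(\<lambda>n. shift (\<epsilon> n) x) \<longlonglongrightarrow> (1 - 0) *\<^sub>R x + 0 *\<^sub>R m"
      unfolding shift_def by (intro tendsto_intros)
    then show ?thesis
      by simp
  qed
  have G_lim: "(\<lambda>n. G (shift (\<epsilon> n) x)) \<longlonglongrightarrow> G x" if "x \<in> X" for x
  proof (rule continuous_on_tendsto_compose[OF continuous shift_lim that])
    have "shift (\<epsilon> n) x \<in> X" for n
      using convexD[OF convex that room[of 0], of "1 - \<epsilon> n" "\<epsilon> n"] \<epsilon>[of n] \<open>0 < \<rho>\<close>
      by (simp add: shift_def)
    then show "\<forall>\<^sub>F n in sequentially. shift (\<epsilon> n) x \<in> X"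
      by simp
  qed
  have "(\<lambda>n. 2 * S * ((G (shift (\<epsilon> n) a) - G (shift (\<epsilon> n) b)) \<bullet> w) - \<kappa> * S\<^sup>2 * (norm w)\<^sup>2)
          \<longlonglongrightarrow> 2 * S * ((G a - G b) \<bullet> w) - \<kappa> * S\<^sup>2 * (norm w)\<^sup>2"
    by (intro tendsto_intros G_lim a b)
  moreover have "(\<lambda>n. (G (shift (\<epsilon> n) a) - G (shift (\<epsilon> n) b)) \<bullet> (shift (\<epsilon> n) a - shift (\<epsilon> n) b))
          \<longlonglongrightarrow> (G a - G b) \<bullet> (a - b)"
    by (intro tendsto_intros G_lim shift_lim a b)
  ultimately show ?thesis
    by (rule LIMSEQ_le) (use gap in blast)
qed

(* In the plane of the triangle (a, b, z) the centroid has room in every direction, which controls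
   the component of G a - G b in that plane; the best step is S = 1 / kappa. *)
lemma projected_cocoercivity:
  assumes a: "a \<in> X" and b: "b \<in> X" and z: "z \<in> X"
  obtains k where "\<And>v. v \<in> span {a - b, z - a} \<Longrightarrow> k \<bullet> v = (G a - G b) \<bullet> v"
    and "(norm k)\<^sup>2 \<le> \<kappa> * ((G a - G b) \<bullet> (a - b))"
proof -
  obtain k r where k: "k \<in> span {a - b, z - a}"
    and r: "\<And>v. v \<in> span {a - b, z - a} \<Longrightarrow> orthogonal r v" and split: "G a - G b = k + r"
    using orthogonal_subspace_decomp_exists[of "{a - b, z - a}" "G a - G b"] by metis
  have agree: "k \<bullet> v = (G a - G b) \<bullet> v" if "v \<in> span {a - b, z - a}" for v
    using r[OF that] by (simp add: split orthogonal_def inner_add_left)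
  obtain \<rho> where "0 < \<rho>" and room: "\<And>\<sigma>. \<bar>\<sigma>\<bar> \<le> \<rho> \<Longrightarrow> (1/3) *\<^sub>R (a + b + z) + \<sigma> *\<^sub>R k \<in> X"
    using convex_room_at_centroid[OF convex a b z k] by blast
  have "(norm k)\<^sup>2 \<le> \<kappa> * ((G a - G b) \<bullet> (a - b))"
  proof (rule le_mult_of_quadratic_family[OF _ nonneg])
    fix S :: real
    assume "0 \<le> S"
    from gradient_gap_lower_bound[OF a b this \<open>0 < \<rho>\<close> room]
    show "2 * S * (norm k)\<^sup>2 - \<kappa> * S\<^sup>2 * (norm k)\<^sup>2 \<le> (G a - G b) \<bullet> (a - b)"
      using agree[OF k] by (simp add: power2_norm_eq_inner)
  qed simp
  with agree that show ?thesis
    by blast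
qed

end

lemma smooth_convex_on_minus_quadratic:
  fixes f :: "'a::euclidean_space \<Rightarrow> real"
  assumes "convex X"
    and grad: "\<And>y. y \<in> X \<Longrightarrow> (f has_derivative (\<lambda>h. g y \<bullet> h)) (at y)"
    and lipschitz: "L-lipschitz_on X g"
    and strong: "\<And>u v. u \<in> X \<Longrightarrow> v \<in> X \<Longrightarrow>
                   f v \<ge> f u + g u \<bullet> (v - u) + \<mu> / 2 * (norm (v - u))\<^sup>2"
    and "\<mu> \<le> L"
  shows "smooth_convex_on X (\<lambda>x. f x - \<mu> / 2 * (norm x)\<^sup>2) (\<lambda>x. g x - \<mu> *\<^sub>R x) (L - \<mu>)"
proof
  show "convex X"
    by fact
  show "continuous_on X (\<lambda>x. g x - \<mu> *\<^sub>R x)"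
    using lipschitz_on_continuous_on[OF lipschitz] by (intro continuous_intros)
  show "0 \<le> L - \<mu>"
    using \<open>\<mu> \<le> L\<close> by simp
  fix u v
  assume u: "u \<in> X" and v: "v \<in> X"
  have sq: "(norm (v - u))\<^sup>2 = (norm v)\<^sup>2 + (norm u)\<^sup>2 - 2 * (u \<bullet> v)"
    by (simp add: power2_norm_diff inner_commute)
  show "f u - \<mu> / 2 * (norm u)\<^sup>2 + (g u - \<mu> *\<^sub>R u) \<bullet> (v - u) \<le> f v - \<mu> / 2 * (norm v)\<^sup>2"
    using strong[OF u v] unfolding sq by (simp add: inner_diff_left dot_square_norm algebra_simps)
  show "f v - \<mu> / 2 * (norm v)\<^sup>2
          \<le> f u - \<mu> / 2 * (norm u)\<^sup>2 + (g u - \<mu> *\<^sub>R u) \<bullet> (v - u) + (L - \<mu>) / 2 * (norm (v - u))\<^sup>2"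
    using lipschitz_gradient_quadratic_upper_bound[OF \<open>convex X\<close> grad lipschitz u v]
    unfolding sq by (simp add: inner_diff_left inner_diff_right dot_square_norm field_simps)
qed

lemma exists_step_in_cball:
  fixes e u :: "'a::real_inner"
  assumes ball: "norm e \<le> t" and inward: "(norm e)\<^sup>2 - t\<^sup>2 < 2 * (e \<bullet> u)"
  obtains s where "0 < s" "s \<le> 1" "norm (e - s *\<^sub>R u) \<le> t"
proof -
  define \<gamma> where "\<gamma> = 2 * (e \<bullet> u) + t\<^sup>2 - (norm e)\<^sup>2"
  define s where "s = min 1 (\<gamma> / ((norm u)\<^sup>2 + 1))"
  have "0 < \<gamma>" "0 < (norm u)\<^sup>2 + 1"
    using inward by (simp_all add: \<gamma>_def add_nonneg_pos)
  have "s * (norm u)\<^sup>2 \<le> \<gamma> / ((norm u)\<^sup>2 + 1) * (norm u)\<^sup>2"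
    by (rule mult_right_mono) (simp_all add: s_def)
  also have "\<dots> \<le> \<gamma>"
    using \<open>0 < \<gamma>\<close> \<open>0 < (norm u)\<^sup>2 + 1\<close> by (simp add: field_simps)
  finally have s: "0 < s" "s \<le> 1" "s * (norm u)\<^sup>2 \<le> \<gamma>"
    using \<open>0 < \<gamma>\<close> \<open>0 < (norm u)\<^sup>2 + 1\<close> by (simp_all add: s_def)
  have "0 \<le> t"
    using ball norm_ge_zero order_trans by blast
  then have "(norm e)\<^sup>2 \<le> t\<^sup>2"
    using ball by (simp add: power_mono)
  have "(norm (e - s *\<^sub>R u))\<^sup>2 = (norm e)\<^sup>2 - 2 * s * (e \<bullet> u) + s\<^sup>2 * (norm u)\<^sup>2"
    by (simp add: power2_norm_diff power_mult_distrib)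
  also have "\<dots> = t\<^sup>2 - (1 - s) * (t\<^sup>2 - (norm e)\<^sup>2) - s * (\<gamma> - s * (norm u)\<^sup>2)"
    by (simp add: \<gamma>_def power2_eq_square algebra_simps)
  also have "\<dots> \<le> t\<^sup>2"
  proof -
    have "0 \<le> (1 - s) * (t\<^sup>2 - (norm e)\<^sup>2)" "0 \<le> s * (\<gamma> - s * (norm u)\<^sup>2)"
      using s \<open>(norm e)\<^sup>2 \<le> t\<^sup>2\<close> by simp_all
    then show ?thesis
      by linarith
  qed
  finally have "norm (e - s *\<^sub>R u) \<le> t"
    using \<open>0 \<le> t\<close> by (simp add: power2_le_iff_abs_le)
  with s that show ?thesis
    by blast
qed

(* If z is that far from b, a short step from z towards b stays in the ball around a. *)
lemma local_lmo_inner_nonpos: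
  fixes a b z c :: "'a::real_inner"
  assumes "convex X" and b: "b \<in> X" and z: "z \<in> X" and ball: "norm (z - a) \<le> t"
    and z_min: "\<And>y. y \<in> X \<Longrightarrow> norm (y - a) \<le> t \<Longrightarrow> c \<bullet> z \<le> c \<bullet> y"
    and far: "(norm (a - b))\<^sup>2 - t\<^sup>2 < (norm (z - b))\<^sup>2"
  shows "c \<bullet> (z - b) \<le> 0"
proof -
  have "(norm ((z - b) - (z - a)))\<^sup>2 = (norm (z - b))\<^sup>2 - 2 * ((z - a) \<bullet> (z - b)) + (norm (z - a))\<^sup>2"
    by (simp only: power2_norm_diff inner_commute)
  then have "(norm (z - a))\<^sup>2 - t\<^sup>2 < 2 * ((z - a) \<bullet> (z - b))"
    using far by simp
  with ball obtain s where s: "0 < s" "s \<le> 1" and "norm ((z - a) - s *\<^sub>R (z - b)) \<le> t"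
    by (rule exists_step_in_cball)
  then have "norm ((z - s *\<^sub>R (z - b)) - a) \<le> t"
    by (simp add: algebra_simps)
  moreover have "z - s *\<^sub>R (z - b) \<in> X"
    using convexD[OF \<open>convex X\<close> z b, of "1 - s" s] s by (simp add: algebra_simps)
  ultimately have "c \<bullet> z \<le> c \<bullet> (z - s *\<^sub>R (z - b))"
    using z_min by blast
  then have "s * (c \<bullet> (z - b)) \<le> 0"
    by (simp add: inner_diff_right)
  then show ?thesis
    using s(1) by (simp add: mult_le_0_iff)
qed

lemma shifted_cocoercive_inequality:
  fixes k d :: "'a::real_inner"
  assumes "(norm k)\<^sup>2 \<le> (L - \<mu>) * (k \<bullet> d)"
  shows "(norm (k + \<mu> *\<^sub>R d))\<^sup>2 + \<mu> * L * (norm d)\<^sup>2 \<le> (L + \<mu>) * ((k + \<mu> *\<^sub>R d) \<bullet> d)"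
proof -
  have "(norm (k + \<mu> *\<^sub>R d))\<^sup>2 = (norm k)\<^sup>2 + 2 * \<mu> * (k \<bullet> d) + \<mu>\<^sup>2 * (norm d)\<^sup>2"
    by (simp add: power2_norm_add power_mult_distrib)
  moreover have "(k + \<mu> *\<^sub>R d) \<bullet> d = k \<bullet> d + \<mu> * (norm d)\<^sup>2"
    by (simp add: inner_add_left dot_square_norm)
  moreover have "(L + \<mu>) * (k \<bullet> d + \<mu> * (norm d)\<^sup>2)
                   - ((norm k)\<^sup>2 + 2 * \<mu> * (k \<bullet> d) + \<mu>\<^sup>2 * (norm d)\<^sup>2 + \<mu> * L * (norm d)\<^sup>2)
                 = (L - \<mu>) * (k \<bullet> d) - (norm k)\<^sup>2"
    by (simp add: power2_eq_square algebra_simps)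
  ultimately show ?thesis
    using assms by simp
qed

lemma rate_mult_le_of_quadratic_bound:
  fixes \<mu> L H r c :: real
  assumes "0 < \<mu>" "\<mu> \<le> L" and bound: "H\<^sup>2 + \<mu> * L * r\<^sup>2 \<le> (L + \<mu>) * c"
  shows "2 * sqrt (\<mu> * L) / (L + \<mu>) * H * r \<le> c"
proof -
  have "2 * sqrt (\<mu> * L) * H * r \<le> H\<^sup>2 + \<mu> * L * r\<^sup>2"
    using sum_squares_bound[of H "sqrt (\<mu> * L) * r"] assms
    by (simp add: power_mult_distrib algebra_simps)
  with bound have "2 * sqrt (\<mu> * L) * H * r \<le> (L + \<mu>) * c"
    by linarith
  then show ?thesis
    using assms by (simp add: field_simps)
qed

lemma norm_sq_le_of_ball_halfspace:
  fixes d e h :: "'a::real_inner"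
  assumes "h \<noteq> 0" "0 \<le> \<theta>"
    and aligned: "\<theta> * norm h * norm d \<le> h \<bullet> d"
    and ball: "norm e \<le> \<theta> * norm d"
    and halfspace: "h \<bullet> (d + e) \<le> 0"
  shows "(norm (d + e))\<^sup>2 \<le> (1 - \<theta>\<^sup>2) * (norm d)\<^sup>2"
proof -
  define r where "r = norm d"
  define H where "H = norm h"
  define c where "c = h \<bullet> d"
  have "0 < H"
    using \<open>h \<noteq> 0\<close> by (simp add: H_def)
  have "c \<le> - (h \<bullet> e)"
    using halfspace by (simp add: c_def inner_add_right)
  also have "\<dots> \<le> H * norm e"
    using norm_cauchy_schwarz[of "- h" e] by (simp add: H_def)
  finally have "H * (\<theta> * r) \<le> H * norm e"
    using aligned by (simp add: H_def r_def c_def mult_ac)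
  then have ne: "norm e = \<theta> * r"
    using \<open>0 < H\<close> ball by (simp add: r_def mult_le_cancel_left_pos)
  \<comment> \<open>Both Cauchy-Schwarz steps are tight, so e points exactly opposite to h.\<close>
  have "(- h) \<bullet> e = norm (- h) * norm e"
    using \<open>c \<le> - (h \<bullet> e)\<close> norm_cauchy_schwarz[of "- h" e] aligned ne
    by (simp add: H_def r_def c_def algebra_simps)
  then have "d \<bullet> (H *\<^sub>R e) = d \<bullet> (norm e *\<^sub>R (- h))"
    unfolding norm_cauchy_schwarz_eq by (simp add: H_def)
  then have de: "H * (d \<bullet> e) = - (norm e * c)"
    by (simp add: c_def inner_commute)
  have "H * (norm (d + e))\<^sup>2 = H * r\<^sup>2 + 2 * (H * (d \<bullet> e)) + H * (norm e)\<^sup>2"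
    by (simp add: power2_norm_add r_def algebra_simps)
  also have "\<dots> = H * r\<^sup>2 - 2 * (\<theta> * r) * c + H * (\<theta> * r)\<^sup>2"
    by (simp add: de ne)
  also have "\<dots> \<le> H * r\<^sup>2 - 2 * (\<theta> * r) * (\<theta> * H * r) + H * (\<theta> * r)\<^sup>2"
    using aligned \<open>0 \<le> \<theta>\<close> by (simp add: H_def r_def c_def mult_left_mono)
  also have "\<dots> = H * ((1 - \<theta>\<^sup>2) * r\<^sup>2)"
    by (simp add: power2_eq_square algebra_simps)
  finally show ?thesis
    using \<open>0 < H\<close> by (simp add: r_def mult_le_cancel_left_pos)
qed

lemma one_minus_square_rate:
  fixes \<mu> L :: real
  assumes "0 < \<mu>" "\<mu> \<le> L"
  shows "1 - (2 * sqrt (\<mu> * L) / (L + \<mu>))\<^sup>2 = ((L - \<mu>) / (L + \<mu>))\<^sup>2"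
proof -
  have "0 < L + \<mu>"
    using assms by simp
  then have "1 - (2 * sqrt (\<mu> * L) / (L + \<mu>))\<^sup>2
               = ((L + \<mu>)\<^sup>2 - (2 * sqrt (\<mu> * L))\<^sup>2) / (L + \<mu>)\<^sup>2"
    by (simp add: power_divide diff_divide_distrib)
  also have "(L + \<mu>)\<^sup>2 - (2 * sqrt (\<mu> * L))\<^sup>2 = (L - \<mu>)\<^sup>2"
    using assms by (simp add: power_mult_distrib power2_eq_square algebra_simps)
  finally show ?thesis
    by (simp add: power_divide)
qed

lemma projected_gradient_alignment:
  fixes f :: "'a::euclidean_space \<Rightarrow> real"
  assumes "convex X"
    and grad: "\<And>y. y \<in> X \<Longrightarrow> (f has_derivative (\<lambda>h. g y \<bullet> h)) (at y)"
    and lipschitz: "L-lipschitz_on X g"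
    and strong: "\<And>u v. u \<in> X \<Longrightarrow> v \<in> X \<Longrightarrow>
                   f v \<ge> f u + g u \<bullet> (v - u) + \<mu> / 2 * (norm (v - u))\<^sup>2"
    and \<mu>: "0 < \<mu>" "\<mu> \<le> L"
    and a: "a \<in> X" and b: "b \<in> X" and z: "z \<in> X" and "a \<noteq> b"
  obtains h where "\<And>v. v \<in> span {a - b, z - a} \<Longrightarrow> h \<bullet> v = (g a - g b) \<bullet> v"
    and "h \<noteq> 0" and "2 * sqrt (\<mu> * L) / (L + \<mu>) * norm h * norm (a - b) \<le> h \<bullet> (a - b)"
proof -
  interpret smooth_convex_on X "\<lambda>x. f x - \<mu> / 2 * (norm x)\<^sup>2" "\<lambda>x. g x - \<mu> *\<^sub>R x" "L - \<mu>"
    using \<open>convex X\<close> grad lipschitz strong \<mu>(2) by (rule smooth_convex_on_minus_quadratic)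
  obtain k where agree: "\<And>v. v \<in> span {a - b, z - a} \<Longrightarrow>
                           k \<bullet> v = ((g a - \<mu> *\<^sub>R a) - (g b - \<mu> *\<^sub>R b)) \<bullet> v"
    and cocoercive: "(norm k)\<^sup>2 \<le> (L - \<mu>) * (((g a - \<mu> *\<^sub>R a) - (g b - \<mu> *\<^sub>R b)) \<bullet> (a - b))"
    using projected_cocoercivity[OF a b z] by blast
  define h where "h = k + \<mu> *\<^sub>R (a - b)"
  have "(norm k)\<^sup>2 \<le> (L - \<mu>) * (k \<bullet> (a - b))"
    using cocoercive agree[of "a - b"] by (simp add: span_base)
  then have bound: "(norm h)\<^sup>2 + \<mu> * L * (norm (a - b))\<^sup>2 \<le> (L + \<mu>) * (h \<bullet> (a - b))"
    unfolding h_def by (rule shifted_cocoercive_inequality)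
  have "h \<bullet> v = (g a - g b) \<bullet> v" if "v \<in> span {a - b, z - a}" for v
    using agree[OF that] by (simp add: h_def inner_add_left inner_diff_left algebra_simps)
  moreover have "h \<noteq> 0"
  proof
    assume "h = 0"
    moreover have "0 < \<mu> * L * (norm (a - b))\<^sup>2"
      using \<mu> \<open>a \<noteq> b\<close> by simp
    ultimately show False
      using bound by simp
  qed
  moreover have "2 * sqrt (\<mu> * L) / (L + \<mu>) * norm h * norm (a - b) \<le> h \<bullet> (a - b)"
    using \<mu> bound by (rule rate_mult_le_of_quadratic_bound)
  ultimately show ?thesis
    using that by blast
qed

lemma local_lmo_step_contraction:
  fixes f :: "'a::euclidean_space \<Rightarrow> real"
  assumes "convex X"
    and grad: "\<And>y. y \<in> X \<Longrightarrow> (f has_derivative (\<lambda>h. g y \<bullet> h)) (at y)"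
    and lipschitz: "L-lipschitz_on X g"
    and strong: "\<And>u v. u \<in> X \<Longrightarrow> v \<in> X \<Longrightarrow>
                   f v \<ge> f u + g u \<bullet> (v - u) + \<mu> / 2 * (norm (v - u))\<^sup>2"
    and \<mu>: "0 < \<mu>" "\<mu> \<le> L"
    and \<theta>: "\<theta> = 2 * sqrt (\<mu> * L) / (L + \<mu>)"
    and a: "a \<in> X" and b: "is_arg_min f (\<lambda>y. y \<in> X) b"
    and z: "is_arg_min (\<lambda>y. g a \<bullet> y) (\<lambda>y. y \<in> X \<inter> cball a (\<theta> * norm (a - b))) z"
  shows "(norm (z - b))\<^sup>2 \<le> (1 - \<theta>\<^sup>2) * (norm (a - b))\<^sup>2"
proof (rule ccontr)
  assume far: "\<not> ?thesis"
  have b_X: "b \<in> X" and b_min: "\<And>y. y \<in> X \<Longrightarrow> f b \<le> f y"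
    using b by (auto simp: is_arg_min_def not_less)
  have z_X: "z \<in> X" and z_ball: "norm (z - a) \<le> \<theta> * norm (a - b)"
    and z_min: "\<And>y. y \<in> X \<Longrightarrow> norm (y - a) \<le> \<theta> * norm (a - b) \<Longrightarrow> g a \<bullet> z \<le> g a \<bullet> y"
    using z by (auto simp: is_arg_min_def not_less dist_norm norm_minus_commute)
  have "a \<noteq> b"
    using far z_ball by auto
  then obtain h where agree: "\<And>v. v \<in> span {a - b, z - a} \<Longrightarrow> h \<bullet> v = (g a - g b) \<bullet> v"
    and "h \<noteq> 0" and aligned: "\<theta> * norm h * norm (a - b) \<le> h \<bullet> (a - b)"
    using projected_gradient_alignment[OF \<open>convex X\<close> grad lipschitz strong \<mu> a b_X z_X] \<theta> by blast
  from far have "(norm (a - b))\<^sup>2 - (\<theta> * norm (a - b))\<^sup>2 < (norm (z - b))\<^sup>2"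
    by (simp add: power_mult_distrib left_diff_distrib)
  with \<open>convex X\<close> b_X z_X z_ball z_min have "g a \<bullet> (z - b) \<le> 0"
    by (rule local_lmo_inner_nonpos)
  moreover have "0 \<le> g b \<bullet> (z - b)"
    using \<open>convex X\<close> grad[OF b_X] b_X b_min z_X by (rule convex_minimizer_first_order)
  moreover have "z - b \<in> span {a - b, z - a}"
    using span_add[OF span_base span_base, of "a - b" "{a - b, z - a}" "z - a"] by simp
  ultimately have "h \<bullet> ((a - b) + (z - a)) \<le> 0"
    using agree by (simp add: inner_diff_left)
  with \<open>h \<noteq> 0\<close> aligned z_ball have "(norm ((a - b) + (z - a)))\<^sup>2 \<le> (1 - \<theta>\<^sup>2) * (norm (a - b))\<^sup>2"
    using \<mu> \<theta> by (intro norm_sq_le_of_ball_halfspace) simp_all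
  with far show False
    by simp
qed

lemma geometric_decay:
  fixes u :: "nat \<Rightarrow> real"
  assumes "0 \<le> q" and step: "\<And>k. u (Suc k) \<le> q * u k"
  shows "u n \<le> q ^ n * u 0"
proof (induction n)
  case (Suc n)
  have "u (Suc n) \<le> q * u n"
    by (rule step)
  also have "\<dots> \<le> q * (q ^ n * u 0)"
    using Suc.IH \<open>0 \<le> q\<close> by (rule mult_left_mono)
  finally show ?case
    by (simp add: mult.assoc)
qed simp

theorem theorem3:
  fixes X :: "'a::euclidean_space set"
    and f :: "'a \<Rightarrow> real" and g :: "'a \<Rightarrow> 'a"
    and L \<mu> :: real
    and x :: "nat \<Rightarrow> 'a" and t :: "nat \<Rightarrow> real" and xs :: 'a
  assumes X: "X \<noteq> {}" "closed X" "convex X"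
    and grad: "\<And>y. (f has_derivative (\<lambda>h. g y \<bullet> h)) (at y)"
    and smooth: "L-lipschitz_on X g"
    and strong: "\<And>u v. u \<in> X \<Longrightarrow> v \<in> X \<Longrightarrow>
                   f v \<ge> f u + g u \<bullet> (v - u) + \<mu> / 2 * (norm (v - u))\<^sup>2"
    and params: "0 < \<mu>" "\<mu> \<le> L"
    and x0: "x 0 \<in> X"
    and iter: "\<And>k. is_arg_min (\<lambda>z. g (x k) \<bullet> z) (\<lambda>z. z \<in> X \<inter> cball (x k) (t k)) (x (Suc k))"
    and xs: "is_arg_min f (\<lambda>y. y \<in> X) xs"
  defines "\<theta> \<equiv> 2 * sqrt (\<mu> * L) / (L + \<mu>)"
  shows "(\<forall>k. g (x k) \<noteq> g xs \<longrightarrow> t k = \<theta> * norm (x k - xs) \<longrightarrow>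
            (norm (x (Suc k) - xs))\<^sup>2 \<le> (1 - \<theta>\<^sup>2) * (norm (x k - xs))\<^sup>2
            \<and> (1 - \<theta>\<^sup>2) * (norm (x k - xs))\<^sup>2 = ((L - \<mu>) / (L + \<mu>))\<^sup>2 * (norm (x k - xs))\<^sup>2)
       \<and> ((\<forall>k. t k = \<theta> * norm (x k - xs)) \<longrightarrow>
            (\<forall>K. (norm (x K - xs))\<^sup>2 \<le> ((L - \<mu>) / (L + \<mu>)) ^ (2 * K) * (norm (x 0 - xs))\<^sup>2))"
proof -
  have \<theta>: "\<theta> = 2 * sqrt (\<mu> * L) / (L + \<mu>)"
    by (simp add: \<theta>_def)
  have x_X: "x k \<in> X" for k
    using x0 iter[of "k - 1"] by (cases k) (auto simp: is_arg_min_def)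
  have rate: "1 - \<theta>\<^sup>2 = ((L - \<mu>) / (L + \<mu>))\<^sup>2"
    unfolding \<theta> using params by (rule one_minus_square_rate)
  have contraction: "(norm (x (Suc k) - xs))\<^sup>2 \<le> ((L - \<mu>) / (L + \<mu>))\<^sup>2 * (norm (x k - xs))\<^sup>2"
    if "t k = \<theta> * norm (x k - xs)" for k
    using local_lmo_step_contraction[OF X(3) grad smooth strong params \<theta> x_X xs iter[of k, unfolded that]]
    by (simp add: rate)
  have "(norm (x K - xs))\<^sup>2 \<le> (((L - \<mu>) / (L + \<mu>))\<^sup>2) ^ K * (norm (x 0 - xs))\<^sup>2"
    if "\<forall>k. t k = \<theta> * norm (x k - xs)" for K
    using that contraction by (intro geometric_decay) auto
  then show ?thesis
    using contraction rate by (auto simp: power_mult)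
qed

end
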